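(* Let $S$ be an $(l,r)$-framed algebra, $\lambda^1,\lambda^2,\lambda^3\in\mathrm{IS}^{(l,r)}$ and $a_i\in S_{\lambda^i}$. Then: (1) for $\lambda^0\in\lambda^1\star\lambda^2$, $a_1\cdot_{\lambda^0}a_2=(-1)^{s(\lambda^0)+s(\lambda^1)+s(\lambda^2)}a_2\cdot_{\lambda^0}a_1$; (2) for $\lambda^0\in\mathrm{IS}^{(l,r)}$ and $\mu'\in A(\lambda^0,\lambda^1,\lambda^2,\lambda^3)$, $a_1\cdot_{\lambda^0}(a_2\cdot_{\mu'}a_3)=\sum_{\mu\in A(\lambda^0,\lambda^3,\lambda^1,\lambda^2)}(-1)^{s(\mu')+s(\mu)+s(\lambda^2)+s(\lambda^0)}B^{\mu,\mu'}_{\lambda^0,\lambda^3,\lambda^1,\lambda^2}(a_1\cdot_\mu a_2)\cdot_{\lambda^0}a_3$.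
   Context: Let $\mathrm{IS}=\{0,\frac12,\frac1{16}\}$ with fusion rule $\star$ (values are subsets of $\mathrm{IS}$): $0\star h=h\star 0=\{h\}$, $\frac12\star\frac12=\{0\}$, $\frac12\star\frac1{16}=\frac1{16}\star\frac12=\{\frac1{16}\}$, $\frac1{16}\star\frac1{16}=\{0,\frac12\}$. For $h_0,\dots,h_3\in\mathrm{IS}$ put $A(h_0,h_1,h_2,h_3)=\{h: h\in h_2\star h_3,\ h_0\in h_1\star h\}$. For $h\in A(h_0,h_1,h_2,h_3)$, $h'\in A(h_0,h_2,h_1,h_3)$ define $B^{h,h'}_{h_0,h_1,h_2,h_3}\in\mathbb{C}$ by: $B_{*,0,*,*}=B_{*,*,0,*}=1$; $B_{*,\frac12,\frac12,*}=-1$; $B_{a,\frac12,\frac1{16},a'}=B_{a,\frac1{16},\frac12,a'}=i$ if $a$ or $a'$ equals $\frac12$, $-i$ otherwise; $B^{b,b'}_{a,\frac1{16},\frac1{16},a'}=e^{-\pi i/8}$ times: $1$ if $a,a'\ne\frac1{16}$, $a=a'$; $i$ if $a,a'\ne\frac1{16}$, $a\neq a'$; $\frac{1+i}2$ if $a=a'=\frac1{16}$, $b=b'$; $\frac{1-i}2$ if $a=a'=\frac1{16}$, $b\ne b'$. For $l,r\ge0$ let $\mathrm{IS}^{(l,r)}=\mathrm{IS}^l\times\mathrm{IS}^r$, $\lambda=(h_1,\dots,h_l,\bar h_1,\dots,\bar h_r)$, $s(\lambda)=\sum h_i-\sum \bar h_j$; $\star$ and $A$ are extended componentwise, and $B^{\lambda,\lambda'}_{\lambda^0,\lambda^1,\lambda^2,\lambda^3}=\prod_{i\le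 l}B^{h_i,h_i'}_{h^0_i,h^1_i,h^2_i,h^3_i}\prod_{j\le r}\overline{B^{\bar h_j,\bar h_j'}_{\bar h^0_j,\bar h^1_j,\bar h^2_j,\bar h^3_j}}$. An $(l,r)$-framed algebra is a finite-dimensional $\mathrm{IS}^{(l,r)}$-graded complex vector space $S=\bigoplus S_\lambda$ with bilinear product $\cdot$ and nonzero $1\in S_0$, writing $a\cdot_\lambda b$ for the $S_\lambda$-component of $a\cdot b$, such that (FA1) $S_\lambda=0$ unless $s(\lambda)\in\mathbb{Z}$; (FA2) $S_0=\mathbb{C}1$, $1$ is a two-sided unit; (FA3) $S_{\lambda^1}\cdot S_{\lambda^2}\subset\bigoplus_{\lambda\in\lambda^1\star\lambda^2}S_\lambda$; (FA4) for $a_i\in S_{\lambda^i}$ and $\lambda'\in A(\lambda^0,\lambda^2,\lambda^1,\lambda^3)$: $a_2\cdot_{\lambda^0}(a_1\cdot_{\lambda'}a_3)=\sum_{\lambda\in A(\lambda^0,\lambda^1,\lambda^2,\lambda^3)}B^{\lambda,\lambda'}_{\lambda^0,\lambda^1,\lambda^2,\lambda^3}a_1\cdot_{\lambda^0}(a_2\cdot_\lambda a_3)$. *)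

theory Defs
  imports Complex_Main
begin

datatype ising = I0 | Ih | Is

fun hval :: "ising \<Rightarrow> real" where
  "hval I0 = 0"
| "hval Ih = 1/2"
| "hval Is = 1/16"

fun fus :: "ising \<Rightarrow> ising \<Rightarrow> ising set" where
  "fus I0 h = {h}"
| "fus h I0 = {h}"
| "fus Ih Ih = {I0}"
| "fus Ih Is = {Is}"
| "fus Is Ih = {Is}"
| "fus Is Is = {I0, Ih}"

definition Aset1 :: "ising \<Rightarrow> ising \<Rightarrow> ising \<Rightarrow> ising \<Rightarrow> ising set" where
  "Aset1 h0 h1 h2 h3 = {h. h \<in> fus h2 h3 \<and> h0 \<in> fus h1 h}"

text \<open>Bc h0 h1 h2 h3 h h' is the braiding coefficient B^{h,h'}_{h0,h1,h2,h3}.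
  In the case h1 = h2 = 1/16 with exactly one of h0, h3 equal to 1/16 the
  relevant index sets are empty, so the value 0 chosen there is irrelevant.\<close>
definition Bc :: "ising \<Rightarrow> ising \<Rightarrow> ising \<Rightarrow> ising \<Rightarrow> ising \<Rightarrow> ising \<Rightarrow> complex" where
  "Bc a h1 h2 a' b b' =
    (if h1 = I0 \<or> h2 = I0 then 1
     else if h1 = Ih \<and> h2 = Ih then -1
     else if (h1 = Ih \<and> h2 = Is) \<or> (h1 = Is \<and> h2 = Ih) then
       (if a = Ih \<or> a' = Ih then \<i> else - \<i>)
     else \<comment> \<open>h1 = h2 = 1/16\<close>
       exp (- pi * \<i> / 8) *
       (if a \<noteq> Is \<and> a' \<noteq> Is then (if a = a' then 1 else \<i>)
        else if a = Is \<and> a' = Is then (if b = b' then (1 + \<i>) / 2 else (1 - \<i>) / 2)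
        else 0))"

text \<open>An element of IS^(l,r) is a pair of lists (h_1..h_l, hbar_1..hbar_r).\<close>
type_synonym idx = "ising list \<times> ising list"

definition ISlr :: "nat \<Rightarrow> nat \<Rightarrow> idx set" where
  "ISlr l r = {(xs, ys). length xs = l \<and> length ys = r}"

definition zero_idx :: "nat \<Rightarrow> nat \<Rightarrow> idx" where
  "zero_idx l r = (replicate l I0, replicate r I0)"

definition sidx :: "idx \<Rightarrow> real" where
  "sidx L = sum_list (map hval (fst L)) - sum_list (map hval (snd L))"

definition fusL :: "idx \<Rightarrow> idx \<Rightarrow> idx set" where
  "fusL L1 L2 =
     listset (map2 fus (fst L1) (fst L2)) \<times> listset (map2 fus (snd L1) (snd L2))"

definition AL :: "idx \<Rightarrow> idx \<Rightarrow> idx \<Rightarrow> idx \<Rightarrow> idx set" where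
  "AL L0 L1 L2 L3 = {L. L \<in> fusL L2 L3 \<and> L0 \<in> fusL L1 L}"

text \<open>BL mu mu' l0 l1 l2 l3 = B^{mu,mu'}_{l0,l1,l2,l3} (holomorphic part times
  complex conjugate of antiholomorphic part).\<close>
definition BL :: "idx \<Rightarrow> idx \<Rightarrow> idx \<Rightarrow> idx \<Rightarrow> idx \<Rightarrow> idx \<Rightarrow> complex" where
  "BL \<mu> \<mu>' L0 L1 L2 L3 =
     (\<Prod>i<length (fst L0).
        Bc (fst L0 ! i) (fst L1 ! i) (fst L2 ! i) (fst L3 ! i) (fst \<mu> ! i) (fst \<mu>' ! i)) *
     (\<Prod>j<length (snd L0).
        cnj (Bc (snd L0 ! j) (snd L1 ! j) (snd L2 ! j) (snd L3 ! j) (snd \<mu> ! j) (snd \<mu>' ! j)))"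

text \<open>(-1)^q for a real exponent q, read as exp(pi i q); for integer q this is
  the usual sign.\<close>
definition mpow :: "real \<Rightarrow> complex" where
  "mpow q = exp (\<i> * complex_of_real (pi * q))"

definition graded_direct_sum ::
  "(complex \<Rightarrow> 'v::ab_group_add \<Rightarrow> 'v) \<Rightarrow> 'i set \<Rightarrow> ('i \<Rightarrow> 'v set) \<Rightarrow> bool" where
  "graded_direct_sum sc Idx Sg \<longleftrightarrow>
     finite Idx \<and>
     (\<forall>L\<in>Idx. module.subspace sc (Sg L)) \<and>
     (\<forall>v. \<exists>!f. (\<forall>\<mu>\<in>Idx. f \<mu> \<in> Sg \<mu>) \<and> (\<forall>\<mu>. \<mu> \<notin> Idx \<longrightarrow> f \<mu> = 0) \<and>
               v = (\<Sum>\<mu>\<in>Idx. f \<mu>))"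

definition gcomp :: "'i set \<Rightarrow> ('i \<Rightarrow> 'v::ab_group_add set) \<Rightarrow> 'i \<Rightarrow> 'v \<Rightarrow> 'v" where
  "gcomp Idx Sg L v =
     (THE f. (\<forall>\<mu>\<in>Idx. f \<mu> \<in> Sg \<mu>) \<and> (\<forall>\<mu>. \<mu> \<notin> Idx \<longrightarrow> f \<mu> = 0) \<and>
             v = (\<Sum>\<mu>\<in>Idx. f \<mu>)) L"

definition dotL :: "nat \<Rightarrow> nat \<Rightarrow> (idx \<Rightarrow> 'v::ab_group_add set) \<Rightarrow> ('v \<Rightarrow> 'v \<Rightarrow> 'v)
                    \<Rightarrow> idx \<Rightarrow> 'v \<Rightarrow> 'v \<Rightarrow> 'v" where
  "dotL l r Sg mult L a b = gcomp (ISlr l r) Sg L (mult a b)"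

definition framed_algebra ::
  "nat \<Rightarrow> nat \<Rightarrow> (complex \<Rightarrow> 'v::ab_group_add \<Rightarrow> 'v) \<Rightarrow> (idx \<Rightarrow> 'v set)
   \<Rightarrow> ('v \<Rightarrow> 'v \<Rightarrow> 'v) \<Rightarrow> 'v \<Rightarrow> bool" where
  "framed_algebra l r sc Sg mult one \<longleftrightarrow>
     \<comment> \<open>finite-dimensional complex vector space\<close>
     vector_space sc \<and>
     (\<exists>B. finite B \<and> module.span sc B = UNIV) \<and>
     \<comment> \<open>IS^(l,r)-graded\<close>
     graded_direct_sum sc (ISlr l r) Sg \<and>
     \<comment> \<open>bilinear product\<close>
     (\<forall>a. Vector_Spaces.linear sc sc (mult a)) \<and>
     (\<forall>b. Vector_Spaces.linear sc sc (\<lambda>a. mult a b)) \<and>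
     \<comment> \<open>nonzero unit in S_0\<close>
     one \<noteq> 0 \<and> one \<in> Sg (zero_idx l r) \<and>
     \<comment> \<open>FA1\<close>
     (\<forall>L\<in>ISlr l r. sidx L \<notin> \<int> \<longrightarrow> Sg L = {0}) \<and>
     \<comment> \<open>FA2\<close>
     Sg (zero_idx l r) = range (\<lambda>c. sc c one) \<and>
     (\<forall>a. mult one a = a \<and> mult a one = a) \<and>
     \<comment> \<open>FA3\<close>
     (\<forall>L1\<in>ISlr l r. \<forall>L2\<in>ISlr l r. \<forall>a\<in>Sg L1. \<forall>b\<in>Sg L2.
        mult a b \<in> module.span sc (\<Union>L\<in>fusL L1 L2. Sg L)) \<and>
     \<comment> \<open>FA4\<close>
     (\<forall>L0\<in>ISlr l r. \<forall>L1\<in>ISlr l r. \<forall>L2\<in>ISlr l r. \<forall>L3\<in>ISlr l r.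
      \<forall>a1\<in>Sg L1. \<forall>a2\<in>Sg L2. \<forall>a3\<in>Sg L3. \<forall>L'\<in>AL L0 L2 L1 L3.
        dotL l r Sg mult L0 a2 (dotL l r Sg mult L' a1 a3) =
        (\<Sum>L\<in>AL L0 L1 L2 L3.
           sc (BL L L' L0 L1 L2 L3) (dotL l r Sg mult L0 a1 (dotL l r Sg mult L a2 a3))))"

end

theory Submission
  imports Defs
begin

text \<open>Put \<open>a\<^sub>3 = 1\<close> (so \<open>\<lambda>\<^sup>3 = 0\<close>) in FA4: the sum collapses to the single term
  \<open>\<lambda> = \<lambda>\<^sup>2\<close>, and braiding with the vacuum is the pure phase
  \<open>(-1)^(s(\<lambda>\<^sup>0) - s(\<lambda>\<^sup>1) - s(\<lambda>\<^sup>2))\<close>. By FA1, \<open>S\<^bsub>\<lambda>\<^sup>0\<^esub> = 0\<close> unless \<open>s(\<lambda>\<^sup>0)\<close> is an integer,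
  so this sign equals \<open>(-1)^(s(\<lambda>\<^sup>0) + s(\<lambda>\<^sup>1) + s(\<lambda>\<^sup>2))\<close>, which is (1). For (2), commute
  \<open>a\<^sub>2\<close> past \<open>a\<^sub>3\<close> by (1), move \<open>a\<^sub>3\<close> to the front by FA4, and commute it back past each
  \<open>a\<^sub>1 \<cdot>\<^sub>\<mu> a\<^sub>2\<close> by (1); the two signs combine to the stated one because
  \<open>(-1)^(2 s(\<lambda>\<^sup>3)) = 1\<close>.\<close>

lemma in_listset_iff: "xs \<in> listset As \<longleftrightarrow> list_all2 (\<in>) xs As"
  by (induction As arbitrary: xs) (auto simp: set_Cons_def list_all2_Cons2)

lemma fus_commute: "fus a b = fus b a"
  by (cases a; cases b; simp)

lemma fus_I0_right [simp]: "fus h I0 = {h}"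
  by (cases h; simp)

lemma fusL_commute: "fusL L1 L2 = fusL L2 L1"
proof -
  have "map2 fus xs ys = map2 fus ys xs" for xs ys
    by (rule nth_equalityI) (auto simp: fus_commute)
  then show ?thesis
    unfolding fusL_def by metis
qed

lemma mem_fusL_iff:
  "L \<in> fusL L1 L2 \<longleftrightarrow>
     list_all2 (\<in>) (fst L) (map2 fus (fst L1) (fst L2)) \<and>
     list_all2 (\<in>) (snd L) (map2 fus (snd L1) (snd L2))"
  by (cases L) (simp add: fusL_def in_listset_iff)

lemma fusL_in_ISlr: "L1 \<in> ISlr l r \<Longrightarrow> L2 \<in> ISlr l r \<Longrightarrow> L \<in> fusL L1 L2 \<Longrightarrow> L \<in> ISlr l r"
  by (cases L) (auto simp: mem_fusL_iff ISlr_def list_all2_lengthD)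

lemma zero_idx_in_ISlr: "zero_idx l r \<in> ISlr l r"
  by (simp add: zero_idx_def ISlr_def)

lemma fusL_zero_idx_right: "L \<in> ISlr l r \<Longrightarrow> fusL L (zero_idx l r) = {L}"
  by (cases L) (auto simp: mem_fusL_iff ISlr_def zero_idx_def list_all2_conv_all_nth
      intro!: nth_equalityI)

lemma AL_zero_idx:
  "L2 \<in> ISlr l r \<Longrightarrow> L0 \<in> fusL L1 L2 \<Longrightarrow> AL L0 L1 L2 (zero_idx l r) = {L2}"
  by (auto simp: AL_def fusL_zero_idx_right)

lemma mem_AL_zero_idx:
  "L1 \<in> ISlr l r \<Longrightarrow> L0 \<in> fusL L1 L2 \<Longrightarrow> L1 \<in> AL L0 L2 L1 (zero_idx l r)"
  by (auto simp: AL_def fusL_zero_idx_right fusL_commute)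

lemma AL_swap_last: "AL L0 L1 L2 L3 = AL L0 L1 L3 L2"
  by (simp add: AL_def fusL_commute)

lemma mpow_eq_cis: "mpow x = cis (pi * x)"
  by (simp add: mpow_def cis_conv_exp)

lemma mpow_zero [simp]: "mpow 0 = 1"
  by (simp add: mpow_def)

lemma mpow_add: "mpow (x + y) = mpow x * mpow y"
  by (simp add: mpow_eq_cis cis_mult algebra_simps)

lemma mpow_uminus: "mpow (- x) = cnj (mpow x)"
  by (simp add: mpow_eq_cis cis_cnj)

lemma prod_mpow: "finite A \<Longrightarrow> (\<Prod>i\<in>A. mpow (f i)) = mpow (\<Sum>i\<in>A. f i)"
  by (induction A rule: finite_induct) (simp_all add: mpow_add)

lemma mpow_mult_shift_Ints:
  assumes "x \<in> \<int>"
  shows "mpow (y + x) * mpow (z + x) = mpow (y + z)"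
proof -
  have "mpow (2 * x) = cis (2 * pi * x)"
    by (simp add: mpow_eq_cis mult_ac)
  then have "mpow (2 * x) = 1"
    using assms by simp
  then show ?thesis
    by (metis mpow_add mult_1_right mult_2 add.assoc add.commute add.left_commute)
qed

lemma Bc_I0:
  assumes "h0 \<in> fus h1 h2"
  shows "Bc h0 h1 h2 I0 b b' = mpow (hval h0 - hval h1 - hval h2)"
proof -
  have eighth: "exp (- pi * \<i> / 8) = mpow (- (1/8))"
    by (simp add: mpow_def algebra_simps)
  have half: "mpow (1/2) = \<i>" "mpow (- (1/2)) = - \<i>" and one: "mpow (- 1) = - 1"
    by (simp_all add: mpow_eq_cis complex_eq_iff)
  have three_eighths: "mpow (- (1/8)) * \<i> = mpow (3/8)"
    using mpow_add[of "- (1/8)" "1/2"] by (simp add: half)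
  from assms show ?thesis
    unfolding Bc_def eighth
    by (cases h1; cases h2; auto simp: half one three_eighths)
qed

lemma sum_list_map_hval: "sum_list (map hval xs) = (\<Sum>i<length xs. hval (xs ! i))"
  by (simp add: sum_list_sum_nth atLeast0LessThan)

lemma prod_Bc_I0:
  assumes "list_all2 (\<in>) xs (map2 fus ys zs)" "length ys = length xs" "length zs = length xs"
  shows "(\<Prod>i<length xs. Bc (xs ! i) (ys ! i) (zs ! i) I0 (u i) (v i))
           = mpow (sum_list (map hval xs) - sum_list (map hval ys) - sum_list (map hval zs))"
proof -
  have "(\<Prod>i<length xs. Bc (xs ! i) (ys ! i) (zs ! i) I0 (u i) (v i))
          = (\<Prod>i<length xs. mpow (hval (xs ! i) - hval (ys ! i) - hval (zs ! i)))"
    using assms by (intro prod.cong) (auto simp: Bc_I0 list_all2_conv_all_nth)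
  also have "\<dots> = mpow (\<Sum>i<length xs. hval (xs ! i) - hval (ys ! i) - hval (zs ! i))"
    by (simp add: prod_mpow)
  finally show ?thesis
    using assms(2,3) by (simp add: sum_list_map_hval sum_subtractf)
qed

lemma BL_zero_idx:
  assumes "L1 \<in> ISlr l r" "L2 \<in> ISlr l r" "L0 \<in> fusL L1 L2"
  shows "BL \<mu> \<mu>' L0 L1 L2 (zero_idx l r) = mpow (sidx L0 - sidx L1 - sidx L2)"
proof -
  obtain x0 y0 x1 y1 x2 y2 where L: "L0 = (x0, y0)" "L1 = (x1, y1)" "L2 = (x2, y2)"
    by (cases L0; cases L1; cases L2)
  have "L0 \<in> ISlr l r"
    using assms fusL_in_ISlr by blast
  with assms L have len: "length x0 = l" "length x1 = l" "length x2 = l"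
    "length y0 = r" "length y1 = r" "length y2 = r"
    by (auto simp: ISlr_def)
  have "list_all2 (\<in>) x0 (map2 fus x1 x2)" "list_all2 (\<in>) y0 (map2 fus y1 y2)"
    using assms(3) L by (simp_all add: mem_fusL_iff)
  then have
    "(\<Prod>i<l. Bc (x0 ! i) (x1 ! i) (x2 ! i) I0 (fst \<mu> ! i) (fst \<mu>' ! i))
       = mpow (sum_list (map hval x0) - sum_list (map hval x1) - sum_list (map hval x2))"
    "(\<Prod>j<r. cnj (Bc (y0 ! j) (y1 ! j) (y2 ! j) I0 (snd \<mu> ! j) (snd \<mu>' ! j)))
       = mpow (- (sum_list (map hval y0) - sum_list (map hval y1) - sum_list (map hval y2)))"
    using prod_Bc_I0[of x0 x1 x2] prod_Bc_I0[of y0 y1 y2] len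
    by (simp_all flip: cnj_prod mpow_uminus)
  with len show ?thesis
    unfolding BL_def zero_idx_def L sidx_def
    by (simp flip: mpow_add) (simp add: algebra_simps)
qed

definition graded_decomposition :: "'i set \<Rightarrow> ('i \<Rightarrow> 'v::ab_group_add set) \<Rightarrow> 'v \<Rightarrow> ('i \<Rightarrow> 'v) \<Rightarrow> bool"
  where "graded_decomposition Idx Sg v f \<longleftrightarrow>
    (\<forall>\<mu>\<in>Idx. f \<mu> \<in> Sg \<mu>) \<and> (\<forall>\<mu>. \<mu> \<notin> Idx \<longrightarrow> f \<mu> = 0) \<and> v = (\<Sum>\<mu>\<in>Idx. f \<mu>)"

locale graded_vector_space = vector_space scale
  for scale :: "complex \<Rightarrow> 'v::ab_group_add \<Rightarrow> 'v" (infixr \<open>*s\<close> 75) +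
  fixes Idx :: "'i set" and Sg :: "'i \<Rightarrow> 'v set"
  assumes graded: "graded_direct_sum scale Idx Sg"
begin

lemma finite_Idx: "finite Idx"
  using graded by (simp add: graded_direct_sum_def)

lemma subspace_grade: "L \<in> Idx \<Longrightarrow> subspace (Sg L)"
  using graded by (simp add: graded_direct_sum_def)

lemma ex1_graded_decomposition: "\<exists>!f. graded_decomposition Idx Sg v f"
  using graded unfolding graded_direct_sum_def graded_decomposition_def by blast

lemma gcomp_eq_The: "gcomp Idx Sg L v = (THE f. graded_decomposition Idx Sg v f) L"
  unfolding gcomp_def graded_decomposition_def ..

lemma graded_decomposition_gcomp: "graded_decomposition Idx Sg v (\<lambda>L. gcomp Idx Sg L v)"
  unfolding gcomp_eq_The using theI'[OF ex1_graded_decomposition] .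

lemma gcomp_unique: "graded_decomposition Idx Sg v f \<Longrightarrow> gcomp Idx Sg L v = f L"
  unfolding gcomp_eq_The using the1_equality[OF ex1_graded_decomposition] by metis

lemma gcomp_in_grade: "L \<in> Idx \<Longrightarrow> gcomp Idx Sg L v \<in> Sg L"
  using graded_decomposition_gcomp unfolding graded_decomposition_def by blast

lemma gcomp_of_mem:
  assumes "L \<in> Idx" "v \<in> Sg L"
  shows "gcomp Idx Sg L v = v"
proof -
  have "graded_decomposition Idx Sg v (\<lambda>\<mu>. if \<mu> = L then v else 0)"
    unfolding graded_decomposition_def
    using assms subspace_grade subspace_0 finite_Idx by (auto simp: sum.delta)
  from gcomp_unique[OF this] show ?thesis
    by simp
qed

lemma gcomp_scale: "gcomp Idx Sg L (c *s v) = c *s gcomp Idx Sg L v"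
proof -
  have "graded_decomposition Idx Sg v (\<lambda>L. gcomp Idx Sg L v)"
    by (rule graded_decomposition_gcomp)
  then have "graded_decomposition Idx Sg (c *s v) (\<lambda>L. c *s gcomp Idx Sg L v)"
    unfolding graded_decomposition_def
    by (metis scale_sum_right scale_zero_right subspace_scale subspace_grade)
  then show ?thesis
    by (rule gcomp_unique)
qed

end

locale framed_alg =
  fixes l r :: nat and sc :: "complex \<Rightarrow> 'v::ab_group_add \<Rightarrow> 'v"
    and Sg :: "idx \<Rightarrow> 'v set" and mult :: "'v \<Rightarrow> 'v \<Rightarrow> 'v" and one :: 'v
  assumes framed: "framed_algebra l r sc Sg mult one"
begin

sublocale graded_vector_space sc "ISlr l r" Sg
  using framed
  by (simp add: framed_algebra_def graded_vector_space_def graded_vector_space_axioms_def)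

abbreviation dot :: "idx \<Rightarrow> 'v \<Rightarrow> 'v \<Rightarrow> 'v"
  where "dot \<equiv> dotL l r Sg mult"

lemma grade_eq_zero_if_nonint: "L \<in> ISlr l r \<Longrightarrow> sidx L \<notin> \<int> \<Longrightarrow> Sg L = {0}"
  using framed by (simp add: framed_algebra_def)

lemma one_in_grade_zero: "one \<in> Sg (zero_idx l r)"
  using framed unfolding framed_algebra_def by blast

lemma dot_braiding:
  assumes "L0 \<in> ISlr l r" "L1 \<in> ISlr l r" "L2 \<in> ISlr l r" "L3 \<in> ISlr l r"
    and "a1 \<in> Sg L1" "a2 \<in> Sg L2" "a3 \<in> Sg L3" "L' \<in> AL L0 L2 L1 L3"
  shows "dot L0 a2 (dot L' a1 a3) = (\<Sum>L\<in>AL L0 L1 L2 L3. sc (BL L L' L0 L1 L2 L3) (dot L0 a1 (dot L a2 a3)))"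
  using framed assms unfolding framed_algebra_def by blast

lemma dot_in_grade: "L \<in> ISlr l r \<Longrightarrow> dot L a b \<in> Sg L"
  by (simp add: dotL_def gcomp_in_grade)

lemma dot_scale_right: "dot L a (sc c b) = sc c (dot L a b)"
proof -
  have "Vector_Spaces.linear sc sc (mult a)"
    using framed by (simp add: framed_algebra_def)
  then have "mult a (sc c b) = sc c (mult a b)"
    by (simp add: linear_iff_module_hom module_hom.scale)
  then show ?thesis
    by (simp add: dotL_def gcomp_scale)
qed

lemma dot_zero_right: "dot L a 0 = 0"
  using dot_scale_right[of L a 0 0] by simp

lemma dot_one_right: "L \<in> ISlr l r \<Longrightarrow> a \<in> Sg L \<Longrightarrow> dot L a one = a"
  using framed by (simp add: dotL_def framed_algebra_def gcomp_of_mem)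

lemma dot_swap_phase:
  assumes "L1 \<in> ISlr l r" "L2 \<in> ISlr l r" "a1 \<in> Sg L1" "a2 \<in> Sg L2" "L0 \<in> fusL L1 L2"
  shows "dot L0 a2 a1 = sc (mpow (sidx L0 - sidx L1 - sidx L2)) (dot L0 a1 a2)"
proof -
  have "L0 \<in> ISlr l r"
    using assms fusL_in_ISlr by blast
  then have "dot L0 a2 (dot L1 a1 one) =
      (\<Sum>L\<in>AL L0 L1 L2 (zero_idx l r). sc (BL L L1 L0 L1 L2 (zero_idx l r)) (dot L0 a1 (dot L a2 one)))"
    using assms
    by (intro dot_braiding zero_idx_in_ISlr one_in_grade_zero mem_AL_zero_idx)
  then show ?thesis
    using assms by (simp add: AL_zero_idx BL_zero_idx dot_one_right)
qed

lemma dot_commute: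
  assumes "L1 \<in> ISlr l r" "L2 \<in> ISlr l r" "a1 \<in> Sg L1" "a2 \<in> Sg L2" "L0 \<in> fusL L1 L2"
  shows "dot L0 a1 a2 = sc (mpow (sidx L0 + sidx L1 + sidx L2)) (dot L0 a2 a1)"
proof (cases "sidx L0 \<in> \<int>")
  case True
  have "mpow (sidx L0 + sidx L1 + sidx L2) * mpow (sidx L0 - sidx L1 - sidx L2) = 1"
    using mpow_mult_shift_Ints[OF True, of "sidx L1 + sidx L2" "- (sidx L1 + sidx L2)"]
    by (simp add: algebra_simps)
  then show ?thesis
    using dot_swap_phase[OF assms] by simp
next
  case False
  moreover have "L0 \<in> ISlr l r"
    using assms fusL_in_ISlr by blast
  ultimately show ?thesis
    using dot_in_grade grade_eq_zero_if_nonint by (metis scale_zero_right singletonD)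
qed

lemma dot_assoc_braided:
  assumes L: "L0 \<in> ISlr l r" "L1 \<in> ISlr l r" "L2 \<in> ISlr l r" "L3 \<in> ISlr l r"
    and a: "a1 \<in> Sg L1" "a2 \<in> Sg L2" "a3 \<in> Sg L3"
    and \<mu>': "\<mu>' \<in> AL L0 L1 L2 L3"
  shows "dot L0 a1 (dot \<mu>' a2 a3) =
    (\<Sum>\<mu>\<in>AL L0 L3 L1 L2. sc (mpow (sidx \<mu>' + sidx \<mu> + sidx L2 + sidx L0) * BL \<mu> \<mu>' L0 L3 L1 L2)
      (dot L0 (dot \<mu> a1 a2) a3))"
proof (cases "sidx L3 \<in> \<int>")
  case False
  then have "a3 = 0"
    using grade_eq_zero_if_nonint L(4) a(3) by blast
  then show ?thesis
    by (simp add: dot_zero_right)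
next
  case True
  have "\<mu>' \<in> fusL L2 L3"
    using \<mu>' by (simp add: AL_def)
  then have swap_inner: "dot \<mu>' a2 a3 = sc (mpow (sidx \<mu>' + sidx L2 + sidx L3)) (dot \<mu>' a3 a2)"
    by (rule dot_commute[OF L(3,4) a(2,3)])
  have braid: "dot L0 a1 (dot \<mu>' a3 a2) =
      (\<Sum>\<mu>\<in>AL L0 L3 L1 L2. sc (BL \<mu> \<mu>' L0 L3 L1 L2) (dot L0 a3 (dot \<mu> a1 a2)))"
    using \<mu>' by (intro dot_braiding L a) (simp add: AL_swap_last)
  have swap_outer: "dot L0 a3 (dot \<mu> a1 a2) =
      sc (mpow (sidx L0 + sidx L3 + sidx \<mu>)) (dot L0 (dot \<mu> a1 a2) a3)"
    if "\<mu> \<in> AL L0 L3 L1 L2" for \<mu>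
  proof -
    have \<mu>: "\<mu> \<in> fusL L1 L2" "L0 \<in> fusL L3 \<mu>"
      using that by (simp_all add: AL_def)
    show ?thesis
      using fusL_in_ISlr[OF L(2,3) \<mu>(1)] \<mu>(2) by (intro dot_commute L(4) a(3) dot_in_grade)
  qed
  have phase: "mpow (sidx \<mu>' + sidx L2 + sidx L3) * mpow (sidx L0 + sidx L3 + sidx \<mu>)
      = mpow (sidx \<mu>' + sidx \<mu> + sidx L2 + sidx L0)" for \<mu>
    using mpow_mult_shift_Ints[OF True, of "sidx \<mu>' + sidx L2" "sidx L0 + sidx \<mu>"]
    by (simp add: algebra_simps)
  have "dot L0 a1 (dot \<mu>' a2 a3) =
      (\<Sum>\<mu>\<in>AL L0 L3 L1 L2. sc (mpow (sidx \<mu>' + sidx L2 + sidx L3))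
        (sc (BL \<mu> \<mu>' L0 L3 L1 L2) (sc (mpow (sidx L0 + sidx L3 + sidx \<mu>)) (dot L0 (dot \<mu> a1 a2) a3))))"
    by (simp add: swap_inner dot_scale_right braid scale_sum_right swap_outer)
  also have "\<dots> = (\<Sum>\<mu>\<in>AL L0 L3 L1 L2. sc (mpow (sidx \<mu>' + sidx \<mu> + sidx L2 + sidx L0) * BL \<mu> \<mu>' L0 L3 L1 L2)
      (dot L0 (dot \<mu> a1 a2) a3))"
    by (simp add: phase[symmetric] mult_ac)
  finally show ?thesis .
qed

end

theorem mainTheorem2:
  fixes l r :: nat
    and sc :: "complex \<Rightarrow> 'v::ab_group_add \<Rightarrow> 'v"
    and Sg :: "idx \<Rightarrow> 'v set"
    and mult :: "'v \<Rightarrow> 'v \<Rightarrow> 'v"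
    and one :: 'v
    and L1 L2 L3 :: idx
    and a1 a2 a3 :: 'v
  assumes "framed_algebra l r sc Sg mult one"
    and "L1 \<in> ISlr l r" "L2 \<in> ISlr l r" "L3 \<in> ISlr l r"
    and "a1 \<in> Sg L1" "a2 \<in> Sg L2" "a3 \<in> Sg L3"
  shows "(\<forall>L0\<in>fusL L1 L2.
            dotL l r Sg mult L0 a1 a2 =
            sc (mpow (sidx L0 + sidx L1 + sidx L2)) (dotL l r Sg mult L0 a2 a1))
       \<and> (\<forall>L0\<in>ISlr l r. \<forall>\<mu>'\<in>AL L0 L1 L2 L3.
            dotL l r Sg mult L0 a1 (dotL l r Sg mult \<mu>' a2 a3) =
            (\<Sum>\<mu>\<in>AL L0 L3 L1 L2.
               sc (mpow (sidx \<mu>' + sidx \<mu> + sidx L2 + sidx L0) * BL \<mu> \<mu>' L0 L3 L1 L2)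
                  (dotL l r Sg mult L0 (dotL l r Sg mult \<mu> a1 a2) a3)))"
proof -
  interpret framed_alg l r sc Sg mult one
    by (rule framed_alg.intro) (fact assms(1))
  show ?thesis
    using dot_commute[OF assms(2,3,5,6)] dot_assoc_braided[OF _ assms(2-7)] by blast
qed

end
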